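(* Let $A,M\in\mathbb{C}^{n\times n}$ be Hermitian positive definite. Let $V_r=[\bm v_{r,1},\dots,\bm v_{r,n}]$ be an invertible matrix with $AV_r=MV_r\Lambda$, $\Lambda=\mathrm{diag}(\lambda_1,\dots,\lambda_n)$, such that $V_r^*AV_r$ and $V_r^*MV_r$ are diagonal, with $|1-\lambda_1|\ge\cdots\ge|1-\lambda_n|\ge0$. Fix $n_c\in\{1,\dots,n\}$ and let $P_\sharp\in\mathbb{C}^{n\times n_c}$ satisfy $\mathrm{range}(P_\sharp)=\mathrm{span}\{\bm v_{r,1},\dots,\bm v_{r,n_c}\}$. Then for all integers $\nu_1,\nu_2\ge0$, $$P_\sharp\in\operatorname*{argmin}_{P\in\mathbb{C}^{n\times n_c}}\|E_{\rm TG}^{\nu_1,\nu_2}(P,P)\|_A\quad\text{and}\quad P_\sharp\in\operatorname*{argmin}_{P\in\mathbb{C}^{n\times n_c}}\|E_{\rm TG}^{\nu_1,\nu_2}(P,P)\|_M$$ (minima over $P$ with $P^*AP$ invertible), and, if $n_c<n$, $$\|E_{\rm TG}^{\nu_1,\nu_2}(P_\sharp,P_\sharp)\|_A=\|E_{\rm TG}^{\nu_1,\nu_2}(P_\sharp,P_\sharp)\|_M=|1-\lambda_{n_c+1}|^{\nu_1+\nu_2}.$$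
   Context: For $P,R\in\mathbb{C}^{n\times n_c}$ with $R^*AP$ invertible, $\Pi(P,R)=P(R^*AP)^{-1}R^*A$ and $E_{\rm TG}^{\nu_1,\nu_2}(P,R)=(I-M^{-1}A)^{\nu_2}(I-\Pi(P,R))(I-M^{-1}A)^{\nu_1}$. For Hermitian positive definite $S$, $\|x\|_S=(x^*Sx)^{1/2}$ and $\|Z\|_S=\max_{x\ne0}\|Zx\|_S/\|x\|_S$. *)

theory Defs
  imports Complex_Main "Jordan_Normal_Form.Schur_Decomposition"
begin

definition qform :: "complex mat \<Rightarrow> complex vec \<Rightarrow> complex" where
  "qform S x = conjugate x \<bullet> (S *\<^sub>v x)"

definition hermitian_pd :: "nat \<Rightarrow> complex mat \<Rightarrow> bool" where
  "hermitian_pd n S \<longleftrightarrow> S \<in> carrier_mat n n \<and> mat_adjoint S = S \<and>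
     (\<forall>x \<in> carrier_vec n. x \<noteq> 0\<^sub>v n \<longrightarrow> Re (qform S x) > 0)"

definition mat_inv :: "complex mat \<Rightarrow> complex mat" where
  "mat_inv B = (SOME C. inverts_mat B C \<and> inverts_mat C B)"

definition Pi_proj :: "complex mat \<Rightarrow> complex mat \<Rightarrow> complex mat \<Rightarrow> complex mat" where
  "Pi_proj A P R = P * mat_inv (mat_adjoint R * A * P) * mat_adjoint R * A"

definition E_TG :: "nat \<Rightarrow> complex mat \<Rightarrow> complex mat \<Rightarrow> nat \<Rightarrow> nat \<Rightarrow> complex mat \<Rightarrow> complex mat \<Rightarrow> complex mat" where
  "E_TG n A M nu1 nu2 P R =
     (1\<^sub>m n - mat_inv M * A) ^\<^sub>m nu2 * (1\<^sub>m n - Pi_proj A P R) * (1\<^sub>m n - mat_inv M * A) ^\<^sub>m nu1"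

definition vnorm_S :: "complex mat \<Rightarrow> complex vec \<Rightarrow> real" where
  "vnorm_S S x = sqrt (Re (qform S x))"

definition mnorm_S :: "nat \<Rightarrow> complex mat \<Rightarrow> complex mat \<Rightarrow> real" where
  "mnorm_S n S Z = Sup {vnorm_S S (Z *\<^sub>v x) / vnorm_S S x | x. x \<in> carrier_vec n \<and> x \<noteq> 0\<^sub>v n}"

end

theory Submission
  imports Defs
begin

(* In the basis V the smoother I - M^-1 A is diag(1 - lam i), and both the A- and the M-norm
   become weighted Euclidean norms sum_i w_i |y_i|^2 with positive weights, since V^* A V and
   V^* M V are positive diagonal. Pi(P,P) is the A-orthogonal projection onto range P.
   For Psh it fixes the first nc coordinates and annihilates the remaining ones, which are
   A-orthogonal to them; so E_TG(Psh,Psh) acts as diag(0,...,0,(1 - lam i)^(nu1+nu2)) and its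
   norm is at most |1 - lam nc|^(nu1+nu2). For any other admissible P, the nc linear conditions
   P^* A (I - M^-1 A)^nu1 V y = 0 have a nonzero solution y supported on the first nc + 1
   coordinates; Pi(P,P) annihilates (I - M^-1 A)^nu1 V y, so E_TG(P,P) multiplies each
   coordinate of y by (1 - lam i)^(nu1+nu2), whose modulus is at least |1 - lam nc|^(nu1+nu2). *)

lemma carrier_mat_adjoint: "P \<in> carrier_mat n k \<Longrightarrow> mat_adjoint P \<in> carrier_mat k n"
  unfolding mat_adjoint_def by auto

lemma index_mat_adjoint:
  "P \<in> carrier_mat n k \<Longrightarrow> i < k \<Longrightarrow> j < n \<Longrightarrow> mat_adjoint P $$ (i, j) = cnj (P $$ (j, i))"
  unfolding mat_adjoint_def by (auto simp: mat_of_rows_def)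

lemma adjoint_sprod:
  fixes P :: "complex mat"
  assumes P: "P \<in> carrier_mat n k" and y: "y \<in> carrier_vec k" and u: "u \<in> carrier_vec n"
  shows "conjugate (P *\<^sub>v y) \<bullet> u = conjugate y \<bullet> (mat_adjoint P *\<^sub>v u)"
proof -
  have "conjugate (P *\<^sub>v y) \<bullet> u = (\<Sum>i<n. \<Sum>j<k. cnj (P $$ (i, j)) * cnj (y $ j) * u $ i)"
    using P y u by (auto simp: scalar_prod_def row_def lessThan_atLeast0 sum_distrib_right
        intro!: sum.cong)
  also have "\<dots> = (\<Sum>j<k. cnj (y $ j) * (\<Sum>i<n. mat_adjoint P $$ (j, i) * u $ i))"
    using P by (subst sum.swap) (simp add: sum_distrib_left index_mat_adjoint ac_simps)
  also have "\<dots> = conjugate y \<bullet> (mat_adjoint P *\<^sub>v u)"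
    using P y u carrier_mat_adjoint[OF P]
    by (auto simp: scalar_prod_def row_def lessThan_atLeast0 intro!: sum.cong)
  finally show ?thesis .
qed

lemma mult_mat_vec_zero: "B \<in> carrier_mat m n \<Longrightarrow> B *\<^sub>v 0\<^sub>v n = 0\<^sub>v m"
  by auto

lemma assoc_mult_mat3_vec:
  assumes "B \<in> carrier_mat m n" "C \<in> carrier_mat n p" "D \<in> carrier_mat p q" "v \<in> carrier_vec q"
  shows "(B * C * D) *\<^sub>v v = B *\<^sub>v (C *\<^sub>v (D *\<^sub>v v))"
proof -
  have "(B * C * D) *\<^sub>v v = (B * C) *\<^sub>v (D *\<^sub>v v)"
    by (rule assoc_mult_mat_vec) (use assms in auto)
  also have "\<dots> = B *\<^sub>v (C *\<^sub>v (D *\<^sub>v v))"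
    by (rule assoc_mult_mat_vec) (use assms in auto)
  finally show ?thesis .
qed

lemma mat_inv_inverts:
  fixes B :: "complex mat"
  assumes B: "B \<in> carrier_mat k k" and inv: "invertible_mat B"
  shows "mat_inv B \<in> carrier_mat k k" "B * mat_inv B = 1\<^sub>m k" "mat_inv B * B = 1\<^sub>m k"
proof -
  from inv obtain C where "inverts_mat B C \<and> inverts_mat C B"
    unfolding invertible_mat_def by auto
  hence "inverts_mat B (mat_inv B) \<and> inverts_mat (mat_inv B) B"
    unfolding mat_inv_def by (rule someI)
  hence right: "B * mat_inv B = 1\<^sub>m k" and left: "mat_inv B * B = 1\<^sub>m (dim_row (mat_inv B))"
    using B unfolding inverts_mat_def by auto
  have "dim_col (mat_inv B) = k" using arg_cong[OF right, of dim_col] by simp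
  moreover have "dim_row (mat_inv B) = k" using arg_cong[OF left, of dim_col] B by simp
  ultimately show "mat_inv B \<in> carrier_mat k k" "B * mat_inv B = 1\<^sub>m k" "mat_inv B * B = 1\<^sub>m k"
    using right left by auto
qed

lemma invertible_mat_if_kernel_trivial:
  fixes B :: "complex mat"
  assumes B: "B \<in> carrier_mat k k"
    and ker: "\<And>v. v \<in> carrier_vec k \<Longrightarrow> B *\<^sub>v v = 0\<^sub>v k \<Longrightarrow> v = 0\<^sub>v k"
  shows "invertible_mat B"
proof -
  have "det B \<noteq> 0" using det_0_iff_vec_prod_zero[OF B] ker by auto
  from det_non_zero_imp_unit[OF B this, of "()"]
  obtain C where "C \<in> carrier_mat k k" "C * B = 1\<^sub>m k" "B * C = 1\<^sub>m k"
    unfolding Units_def ring_mat_def by auto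
  thus ?thesis using B unfolding invertible_mat_def inverts_mat_def by auto
qed

(* Appending a zero row to the first k + 1 columns of B gives a singular square matrix. *)
lemma wide_mat_kernel_vec:
  fixes B :: "complex mat"
  assumes B: "B \<in> carrier_mat k n" and kn: "k < n"
  obtains v where "v \<in> carrier_vec n" "v \<noteq> 0\<^sub>v n" "B *\<^sub>v v = 0\<^sub>v k"
    "\<And>i. k < i \<Longrightarrow> i < n \<Longrightarrow> v $ i = 0"
proof -
  define K where "K = mat (Suc k) (Suc k) (\<lambda>(i, j). if i = k then 0 else B $$ (i, j))"
  have K: "K \<in> carrier_mat (Suc k) (Suc k)" unfolding K_def by auto
  have "K = mat\<^sub>r (Suc k) (Suc k)
      (\<lambda>i. if i = k then 0\<^sub>v (Suc k) else vec (Suc k) (\<lambda>j. B $$ (i, j)))"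
    unfolding K_def by (intro eq_matI) auto
  hence "det K = 0" using det_row_0[of k "Suc k" "\<lambda>i. vec (Suc k) (\<lambda>j. B $$ (i, j))"] by auto
  then obtain u where u: "u \<in> carrier_vec (Suc k)" "u \<noteq> 0\<^sub>v (Suc k)" "K *\<^sub>v u = 0\<^sub>v (Suc k)"
    using det_0_iff_vec_prod_zero[OF K] by auto
  define v where "v = vec n (\<lambda>i. if i \<le> k then u $ i else 0)"
  have "v \<noteq> 0\<^sub>v n"
  proof
    assume "v = 0\<^sub>v n"
    have "u $ i = 0" if "i < Suc k" for i
    proof -
      have "u $ i = v $ i" using that kn by (simp add: v_def)
      also have "\<dots> = 0" using \<open>v = 0\<^sub>v n\<close> that kn by simp
      finally show ?thesis .
    qed
    thus False using u(1,2) by (auto intro: eq_vecI)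
  qed
  moreover have "B *\<^sub>v v = 0\<^sub>v k"
  proof (rule eq_vecI)
    fix i assume "i < dim_vec (0\<^sub>v k :: complex vec)"
    hence i: "i < k" by simp
    have "(B *\<^sub>v v) $ i = (\<Sum>j\<in>{0..<n}. B $$ (i, j) * v $ j)"
      using B i by (simp add: scalar_prod_def row_def v_def)
    also have "\<dots> = (\<Sum>j\<in>{0..<Suc k}. K $$ (i, j) * u $ j)"
      by (rule sum.mono_neutral_cong_right) (use kn i in \<open>auto simp: v_def K_def\<close>)
    also have "\<dots> = (K *\<^sub>v u) $ i" using K u(1) i by (simp add: scalar_prod_def row_def)
    finally show "(B *\<^sub>v v) $ i = 0\<^sub>v k $ i" using u(3) i by simp
  qed (use B in simp)
  ultimately show ?thesis using that[of v] by (auto simp: v_def)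
qed

lemma dim_mat_diag [simp]: "dim_row (mat_diag n f) = n" "dim_col (mat_diag n f) = n"
  unfolding mat_diag_def by simp_all

lemma mat_diag_mult_vec_carrier [simp]: "y \<in> carrier_vec n \<Longrightarrow> mat_diag n f *\<^sub>v y \<in> carrier_vec n"
  using mult_mat_vec_carrier[OF mat_diag_dim] .

lemma index_mat_diag_mult_vec:
  assumes "y \<in> carrier_vec n" and "i < n"
  shows "(mat_diag n f *\<^sub>v y) $ i = f i * y $ i"
proof -
  have "(mat_diag n f *\<^sub>v y) $ i = (\<Sum>j\<in>{0..<n}. (if i = j then f j else 0) * y $ j)"
    using assms by (simp add: mat_diag_def scalar_prod_def row_def)
  also have "\<dots> = (\<Sum>j\<in>{0..<n}. if i = j then f i * y $ j else 0)"
    by (rule sum.cong) auto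
  finally show ?thesis using assms(2) by simp
qed

lemma hermitian_pd_carrier: "hermitian_pd n S \<Longrightarrow> S \<in> carrier_mat n n"
  unfolding hermitian_pd_def by simp

lemma hermitian_pd_qform_eq_0:
  "hermitian_pd n S \<Longrightarrow> x \<in> carrier_vec n \<Longrightarrow> qform S x = 0 \<Longrightarrow> x = 0\<^sub>v n"
  unfolding hermitian_pd_def by force

lemma hermitian_pd_invertible:
  assumes S: "hermitian_pd n S"
  shows "invertible_mat S"
proof (rule invertible_mat_if_kernel_trivial[OF hermitian_pd_carrier[OF S]])
  fix v :: "complex vec" assume "v \<in> carrier_vec n" and "S *\<^sub>v v = 0\<^sub>v n"
  moreover from this have "qform S v = 0" unfolding qform_def by simp
  ultimately show "v = 0\<^sub>v n" using hermitian_pd_qform_eq_0[OF S] by blast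
qed

lemma gram_mat_carrier:
  "A \<in> carrier_mat n n \<Longrightarrow> P \<in> carrier_mat n k \<Longrightarrow> mat_adjoint P * A * P \<in> carrier_mat k k"
  using carrier_mat_adjoint[of P n k] by auto

lemma invertible_gram_mat:
  assumes A: "hermitian_pd n A" and P: "P \<in> carrier_mat n k"
    and inj: "\<And>u. u \<in> carrier_vec k \<Longrightarrow> P *\<^sub>v u = 0\<^sub>v n \<Longrightarrow> u = 0\<^sub>v k"
  shows "invertible_mat (mat_adjoint P * A * P)"
proof (rule invertible_mat_if_kernel_trivial[OF gram_mat_carrier[OF hermitian_pd_carrier[OF A] P]])
  have A': "A \<in> carrier_mat n n" and P': "mat_adjoint P \<in> carrier_mat k n"
    using hermitian_pd_carrier[OF A] carrier_mat_adjoint[OF P] .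
  fix v :: "complex vec" assume v: "v \<in> carrier_vec k" and "(mat_adjoint P * A * P) *\<^sub>v v = 0\<^sub>v k"
  hence "mat_adjoint P *\<^sub>v (A *\<^sub>v (P *\<^sub>v v)) = 0\<^sub>v k"
    using assoc_mult_mat3_vec[OF P' A' P v] by simp
  hence "qform A (P *\<^sub>v v) = 0"
    unfolding qform_def using adjoint_sprod[OF P v, of "A *\<^sub>v (P *\<^sub>v v)"] A' P v by simp
  hence "P *\<^sub>v v = 0\<^sub>v n" using hermitian_pd_qform_eq_0[OF A] P v by simp
  thus "v = 0\<^sub>v k" using inj[OF v] by simp
qed

lemma vnorm_S_pos:
  "hermitian_pd n X \<Longrightarrow> x \<in> carrier_vec n \<Longrightarrow> x \<noteq> 0\<^sub>v n \<Longrightarrow> 0 < vnorm_S X x"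
  unfolding hermitian_pd_def vnorm_S_def by simp

lemma vnorm_S_nonneg:
  assumes X: "hermitian_pd n X" and x: "x \<in> carrier_vec n"
  shows "0 \<le> vnorm_S X x"
proof (cases "x = 0\<^sub>v n")
  case True
  thus ?thesis
    using hermitian_pd_carrier[OF X] by (simp add: vnorm_S_def qform_def mult_mat_vec_zero)
qed (use vnorm_S_pos[OF X x] in simp)

lemma mnorm_S_le:
  assumes X: "hermitian_pd n X" and n: "0 < n"
    and le: "\<And>x. x \<in> carrier_vec n \<Longrightarrow> vnorm_S X (Z *\<^sub>v x) \<le> L * vnorm_S X x"
  shows "mnorm_S n X Z \<le> L"
  unfolding mnorm_S_def
proof (rule cSup_least)
  show "{vnorm_S X (Z *\<^sub>v x) / vnorm_S X x | x. x \<in> carrier_vec n \<and> x \<noteq> 0\<^sub>v n} \<noteq> {}"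
    using unit_vec_nonzero[OF n] unit_vec_carrier by blast
  fix r assume "r \<in> {vnorm_S X (Z *\<^sub>v x) / vnorm_S X x | x. x \<in> carrier_vec n \<and> x \<noteq> 0\<^sub>v n}"
  then obtain x where "x \<in> carrier_vec n" "x \<noteq> 0\<^sub>v n" "r = vnorm_S X (Z *\<^sub>v x) / vnorm_S X x"
    by blast
  thus "r \<le> L" using le vnorm_S_pos[OF X] by (simp add: pos_divide_le_eq)
qed

(* Without the bound, the supremum in mnorm_S is an unspecified real. *)
lemma mnorm_S_ge:
  assumes X: "hermitian_pd n X"
    and bound: "\<And>x. x \<in> carrier_vec n \<Longrightarrow> vnorm_S X (Z *\<^sub>v x) \<le> K * vnorm_S X x"
    and x: "x \<in> carrier_vec n" "x \<noteq> 0\<^sub>v n" and L: "L * vnorm_S X x \<le> vnorm_S X (Z *\<^sub>v x)"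
  shows "L \<le> mnorm_S n X Z"
proof -
  let ?R = "{vnorm_S X (Z *\<^sub>v x) / vnorm_S X x | x. x \<in> carrier_vec n \<and> x \<noteq> 0\<^sub>v n}"
  have "bdd_above ?R"
    by (rule bdd_aboveI[of _ K]) (use bound vnorm_S_pos[OF X] in \<open>auto simp: pos_divide_le_eq\<close>)
  moreover have "vnorm_S X (Z *\<^sub>v x) / vnorm_S X x \<in> ?R" using x by blast
  ultimately have "vnorm_S X (Z *\<^sub>v x) / vnorm_S X x \<le> mnorm_S n X Z"
    unfolding mnorm_S_def by (rule cSup_upper[rotated])
  moreover have "L \<le> vnorm_S X (Z *\<^sub>v x) / vnorm_S X x"
    using L vnorm_S_pos[OF X x] by (simp add: pos_le_divide_eq)
  ultimately show ?thesis by linarith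
qed

lemma mnorm_S_nonneg:
  assumes X: "hermitian_pd n X" and n: "0 < n" and Z: "Z \<in> carrier_mat n n"
    and bound: "\<And>x. x \<in> carrier_vec n \<Longrightarrow> vnorm_S X (Z *\<^sub>v x) \<le> K * vnorm_S X x"
  shows "0 \<le> mnorm_S n X Z"
proof (rule mnorm_S_ge[OF X bound unit_vec_carrier unit_vec_nonzero[OF n]])
  have "0 \<le> vnorm_S X (Z *\<^sub>v unit_vec n 0)" by (rule vnorm_S_nonneg[OF X]) (use Z in simp)
  thus "0 * vnorm_S X (unit_vec n 0) \<le> vnorm_S X (Z *\<^sub>v unit_vec n 0)" by simp
qed

context
  fixes A P :: "complex mat" and n k :: nat
  assumes A: "A \<in> carrier_mat n n" and P: "P \<in> carrier_mat n k"
    and PAP: "invertible_mat (mat_adjoint P * A * P)"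
begin

lemma Pi_proj_carrier: "Pi_proj A P P \<in> carrier_mat n n"
  unfolding Pi_proj_def
  using mat_inv_inverts(1)[OF gram_mat_carrier[OF A P] PAP] carrier_mat_adjoint[OF P] A P by auto

lemma Pi_proj_mult_vec:
  "u \<in> carrier_vec n \<Longrightarrow>
    Pi_proj A P P *\<^sub>v u = P *\<^sub>v (mat_inv (mat_adjoint P * A * P) *\<^sub>v (mat_adjoint P *\<^sub>v (A *\<^sub>v u)))"
  unfolding Pi_proj_def
  using mat_inv_inverts(1)[OF gram_mat_carrier[OF A P] PAP] carrier_mat_adjoint[OF P] A P
  by (simp add: assoc_mult_mat_vec[of _ n n _ n] assoc_mult_mat_vec[of _ n k _ n]
      assoc_mult_mat_vec[of _ n k _ k] assoc_mult_mat_vec[of _ k k _ n])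

lemma Pi_proj_fixes_range: "w \<in> carrier_vec k \<Longrightarrow> Pi_proj A P P *\<^sub>v (P *\<^sub>v w) = P *\<^sub>v w"
  using Pi_proj_mult_vec[of "P *\<^sub>v w"] mat_inv_inverts[OF gram_mat_carrier[OF A P] PAP]
    carrier_mat_adjoint[OF P] A P
  by (simp add: assoc_mult_mat_vec[of _ k n _ n, symmetric]
      assoc_mult_mat_vec[of _ k n _ k, symmetric] assoc_mult_mat_vec[of _ k k _ k, symmetric])

lemma Pi_proj_A_orthogonal:
  "u \<in> carrier_vec n \<Longrightarrow> mat_adjoint P *\<^sub>v (A *\<^sub>v u) = 0\<^sub>v k \<Longrightarrow> Pi_proj A P P *\<^sub>v u = 0\<^sub>v n"
  using Pi_proj_mult_vec[of u] mat_inv_inverts(1)[OF gram_mat_carrier[OF A P] PAP] P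
  by (simp add: mult_mat_vec_zero)

end

definition smoother :: "nat \<Rightarrow> complex mat \<Rightarrow> complex mat \<Rightarrow> complex mat" where
  "smoother n A M = 1\<^sub>m n - mat_inv M * A"

lemma smoother_carrier:
  assumes "A \<in> carrier_mat n n" and M: "hermitian_pd n M"
  shows "smoother n A M \<in> carrier_mat n n"
  unfolding smoother_def
  using mat_inv_inverts(1)[OF hermitian_pd_carrier[OF M] hermitian_pd_invertible[OF M]] assms(1)
  by auto

context
  fixes A M P :: "complex mat" and n k :: nat
  assumes A: "A \<in> carrier_mat n n" and M: "hermitian_pd n M" and P: "P \<in> carrier_mat n k"
    and PAP: "invertible_mat (mat_adjoint P * A * P)"
begin

lemma E_TG_carrier: "E_TG n A M nu1 nu2 P P \<in> carrier_mat n n"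
  using smoother_carrier[OF A M] Pi_proj_carrier[OF A P PAP]
  unfolding E_TG_def smoother_def[symmetric] by auto

lemma E_TG_mult_vec:
  assumes x: "x \<in> carrier_vec n"
  shows "E_TG n A M nu1 nu2 P P *\<^sub>v x =
    smoother n A M ^\<^sub>m nu2 *\<^sub>v
      (smoother n A M ^\<^sub>m nu1 *\<^sub>v x - Pi_proj A P P *\<^sub>v (smoother n A M ^\<^sub>m nu1 *\<^sub>v x))"
proof -
  have S: "smoother n A M ^\<^sub>m j \<in> carrier_mat n n" for j
    using smoother_carrier[OF A M] by simp
  have I_Pi: "1\<^sub>m n - Pi_proj A P P \<in> carrier_mat n n"
    using Pi_proj_carrier[OF A P PAP] by (rule minus_carrier_mat)
  have y: "smoother n A M ^\<^sub>m nu1 *\<^sub>v x \<in> carrier_vec n" using S x by (rule mult_mat_vec_carrier)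
  show ?thesis
    unfolding E_TG_def smoother_def[symmetric] assoc_mult_mat3_vec[OF S I_Pi S x]
    using minus_mult_distrib_mat_vec[OF one_carrier_mat Pi_proj_carrier[OF A P PAP] y] y by simp
qed

end

locale ordered_eigenbasis =
  fixes n :: nat and A M V :: "complex mat" and lam :: "nat \<Rightarrow> complex"
  assumes A: "hermitian_pd n A" and M: "hermitian_pd n M"
    and V: "V \<in> carrier_mat n n" and V_invertible: "invertible_mat V"
    and eig: "A * V = M * V * mat n n (\<lambda>(i, j). if i = j then lam i else 0)"
    and diagonal_A: "diagonal_mat (mat_adjoint V * A * V)"
    and diagonal_M: "diagonal_mat (mat_adjoint V * M * V)"
    and order: "\<And>i j. i \<le> j \<Longrightarrow> j < n \<Longrightarrow> cmod (1 - lam j) \<le> cmod (1 - lam i)"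
    and dim_pos: "0 < n"
begin

lemma A_carrier: "A \<in> carrier_mat n n" and M_carrier: "M \<in> carrier_mat n n"
  using hermitian_pd_carrier[OF A] hermitian_pd_carrier[OF M] .

lemma V_inverse: "mat_inv V \<in> carrier_mat n n" "V * mat_inv V = 1\<^sub>m n" "mat_inv V * V = 1\<^sub>m n"
  using mat_inv_inverts[OF V V_invertible] .

lemma V_mult_inv_V_vec: "x \<in> carrier_vec n \<Longrightarrow> V *\<^sub>v (mat_inv V *\<^sub>v x) = x"
  using assoc_mult_mat_vec[OF V V_inverse(1), of x] V_inverse(2) by simp

lemma inv_V_mult_V_vec: "y \<in> carrier_vec n \<Longrightarrow> mat_inv V *\<^sub>v (V *\<^sub>v y) = y"
  using assoc_mult_mat_vec[OF V_inverse(1) V, of y] V_inverse(3) by simp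

lemma V_coordinates:
  assumes x: "x \<in> carrier_vec n"
  obtains y where "y \<in> carrier_vec n" "x = V *\<^sub>v y"
  using that[of "mat_inv V *\<^sub>v x"] V_inverse(1) x V_mult_inv_V_vec by simp

lemma V_mult_vec_nonzero:
  assumes y: "y \<in> carrier_vec n" and nz: "y \<noteq> 0\<^sub>v n"
  shows "V *\<^sub>v y \<noteq> 0\<^sub>v n"
  using inv_V_mult_V_vec[OF y] V_inverse(1) nz by (auto simp: mult_mat_vec_zero)

definition diagonalized :: "complex mat \<Rightarrow> bool" where
  "diagonalized X \<longleftrightarrow> hermitian_pd n X \<and> diagonal_mat (mat_adjoint V * X * V)"

definition weight :: "complex mat \<Rightarrow> nat \<Rightarrow> real" where
  "weight X i = Re ((mat_adjoint V * X * V) $$ (i, i))"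

lemma diagonalized_A: "diagonalized A" and diagonalized_M: "diagonalized M"
  using A M diagonal_A diagonal_M unfolding diagonalized_def by auto

lemma sprod_V_diagonal:
  assumes X: "X \<in> carrier_mat n n" and d: "diagonal_mat (mat_adjoint V * X * V)"
    and w: "w \<in> carrier_vec n" and b: "b \<in> carrier_vec n"
  shows "conjugate (V *\<^sub>v w) \<bullet> (X *\<^sub>v (V *\<^sub>v b)) =
    (\<Sum>i<n. cnj (w $ i) * ((mat_adjoint V * X * V) $$ (i, i) * b $ i))"
proof -
  let ?D = "mat_adjoint V * X * V"
  have V': "mat_adjoint V \<in> carrier_mat n n" using carrier_mat_adjoint[OF V] .
  have "?D = mat_diag n (\<lambda>i. ?D $$ (i, i))"
    using d V' X V unfolding diagonal_mat_def mat_diag_def by (intro eq_matI) auto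
  hence D_b: "?D *\<^sub>v b = mat_diag n (\<lambda>i. ?D $$ (i, i)) *\<^sub>v b" by simp
  have "conjugate (V *\<^sub>v w) \<bullet> (X *\<^sub>v (V *\<^sub>v b)) = conjugate w \<bullet> (?D *\<^sub>v b)"
    using adjoint_sprod[OF V w, of "X *\<^sub>v (V *\<^sub>v b)"] assoc_mult_mat3_vec[OF V' X V b] X V b
    by simp
  also have "\<dots> = (\<Sum>i<n. cnj (w $ i) * (?D $$ (i, i) * b $ i))"
    unfolding D_b scalar_prod_def using w b
    by (auto simp: lessThan_atLeast0 index_mat_diag_mult_vec
        simp del: index_mult_mat_vec intro!: sum.cong)
  finally show ?thesis .
qed

lemma qform_V:
  assumes X: "diagonalized X" and y: "y \<in> carrier_vec n"
  shows "Re (qform X (V *\<^sub>v y)) = (\<Sum>i<n. weight X i * (cmod (y $ i))\<^sup>2)"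
proof -
  have "qform X (V *\<^sub>v y) = (\<Sum>i<n. cnj (y $ i) * ((mat_adjoint V * X * V) $$ (i, i) * y $ i))"
    using X sprod_V_diagonal[OF hermitian_pd_carrier _ y y] unfolding qform_def diagonalized_def
    by blast
  also have "\<dots> = (\<Sum>i<n. (mat_adjoint V * X * V) $$ (i, i) * complex_of_real ((cmod (y $ i))\<^sup>2))"
    unfolding complex_norm_square by (simp add: ac_simps)
  finally show ?thesis unfolding weight_def by (simp add: Re_sum)
qed

lemma vnorm_V:
  "diagonalized X \<Longrightarrow> y \<in> carrier_vec n \<Longrightarrow>
    vnorm_S X (V *\<^sub>v y) = sqrt (\<Sum>i<n. weight X i * (cmod (y $ i))\<^sup>2)"
  unfolding vnorm_S_def by (simp add: qform_V)

lemma weight_pos: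
  assumes X: "diagonalized X" and i: "i < n"
  shows "0 < weight X i"
proof -
  have "Re (qform X (V *\<^sub>v unit_vec n i)) = (\<Sum>j<n. weight X j * (cmod (unit_vec n i $ j))\<^sup>2)"
    by (rule qform_V[OF X unit_vec_carrier])
  also have "\<dots> = (\<Sum>j<n. if j = i then weight X i else 0)"
    by (rule sum.cong) (auto simp: i)
  also have "\<dots> = weight X i" using i by simp
  finally show ?thesis
    using X V_mult_vec_nonzero[OF unit_vec_carrier unit_vec_nonzero[OF i]] V
    unfolding diagonalized_def hermitian_pd_def by force
qed

lemma vnorm_V_compare:
  assumes X: "diagonalized X" and h: "h \<in> carrier_vec n" and g: "g \<in> carrier_vec n"
    and c: "0 \<le> c" and d: "0 \<le> d"
    and le: "\<And>i. i < n \<Longrightarrow> c * cmod (h $ i) \<le> d * cmod (g $ i)"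
  shows "c * vnorm_S X (V *\<^sub>v h) \<le> d * vnorm_S X (V *\<^sub>v g)"
proof -
  have "(\<Sum>i<n. weight X i * (c * cmod (h $ i))\<^sup>2) \<le> (\<Sum>i<n. weight X i * (d * cmod (g $ i))\<^sup>2)"
    using le c less_imp_le[OF weight_pos[OF X]] by (intro sum_mono mult_left_mono power_mono) auto
  hence "sqrt (c\<^sup>2 * (\<Sum>i<n. weight X i * (cmod (h $ i))\<^sup>2)) \<le>
      sqrt (d\<^sup>2 * (\<Sum>i<n. weight X i * (cmod (g $ i))\<^sup>2))"
    by (simp add: sum_distrib_left power_mult_distrib ac_simps)
  thus ?thesis using c d by (simp add: vnorm_V[OF X h] vnorm_V[OF X g] real_sqrt_mult)
qed

lemma coordinate_le_vnorm:
  assumes X: "diagonalized X" and y: "y \<in> carrier_vec n" and j: "j < n"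
  shows "sqrt (weight X j) * cmod (y $ j) \<le> vnorm_S X (V *\<^sub>v y)"
proof -
  have "weight X j * (cmod (y $ j))\<^sup>2 \<le> (\<Sum>i<n. weight X i * (cmod (y $ i))\<^sup>2)"
    using j less_imp_le[OF weight_pos[OF X]] by (intro member_le_sum) auto
  hence "sqrt (weight X j * (cmod (y $ j))\<^sup>2) \<le> vnorm_S X (V *\<^sub>v y)"
    unfolding vnorm_V[OF X y] by (rule real_sqrt_le_mono)
  thus ?thesis using weight_pos[OF X j] by (simp add: real_sqrt_mult)
qed

lemma index_mult_mat_vec_le_vnorm:
  assumes X: "diagonalized X" and T: "T \<in> carrier_mat n n" and y: "y \<in> carrier_vec n"
    and i: "i < n"
  shows "cmod ((T *\<^sub>v y) $ i) \<le>
    (\<Sum>j<n. cmod (T $$ (i, j)) / sqrt (weight X j)) * vnorm_S X (V *\<^sub>v y)"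
proof -
  have "(T *\<^sub>v y) $ i = (\<Sum>j<n. T $$ (i, j) * y $ j)"
    using T y i by (simp add: scalar_prod_def row_def lessThan_atLeast0)
  hence "cmod ((T *\<^sub>v y) $ i) \<le> (\<Sum>j<n. cmod (T $$ (i, j)) * cmod (y $ j))"
    by (auto intro: order.trans[OF norm_sum] simp: norm_mult)
  also have "\<dots> \<le> (\<Sum>j<n. cmod (T $$ (i, j)) * (vnorm_S X (V *\<^sub>v y) / sqrt (weight X j)))"
    using coordinate_le_vnorm[OF X y] weight_pos[OF X]
    by (intro sum_mono mult_left_mono) (auto simp: pos_le_divide_eq ac_simps)
  finally show ?thesis by (simp add: sum_distrib_right)
qed

lemma vnorm_bounded:
  assumes X: "diagonalized X" and Z: "Z \<in> carrier_mat n n"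
  obtains K where "\<And>x. x \<in> carrier_vec n \<Longrightarrow> vnorm_S X (Z *\<^sub>v x) \<le> K * vnorm_S X x"
proof -
  define T where "T = mat_inv V * Z * V"
  have T: "T \<in> carrier_mat n n" unfolding T_def using V_inverse(1) Z V by auto
  define c where "c i = (\<Sum>j<n. cmod (T $$ (i, j)) / sqrt (weight X j))" for i
  define K where "K = sqrt (\<Sum>i<n. weight X i * (c i)\<^sup>2)"
  have K_sq: "K\<^sup>2 = (\<Sum>i<n. weight X i * (c i)\<^sup>2)" and K: "0 \<le> K"
    unfolding K_def using less_imp_le[OF weight_pos[OF X]] by (auto intro!: sum_nonneg)
  have "vnorm_S X (Z *\<^sub>v x) \<le> K * vnorm_S X x" if x: "x \<in> carrier_vec n" for x
  proof -
    obtain y where y: "y \<in> carrier_vec n" and x_eq: "x = V *\<^sub>v y" using V_coordinates[OF x] .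
    define N where "N = vnorm_S X (V *\<^sub>v y)"
    have N: "0 \<le> N"
      unfolding N_def using X V y by (intro vnorm_S_nonneg) (auto simp: diagonalized_def)
    have "V *\<^sub>v (T *\<^sub>v y) = (V * mat_inv V) *\<^sub>v (Z *\<^sub>v (V *\<^sub>v y))"
      unfolding T_def using assoc_mult_mat3_vec[OF V_inverse(1) Z V y] V_inverse(1) V Z y
      by (simp add: assoc_mult_mat_vec[of _ n n _ n])
    hence Zx: "Z *\<^sub>v x = V *\<^sub>v (T *\<^sub>v y)" unfolding x_eq using V_inverse(2) Z V y by simp
    have "(\<Sum>i<n. weight X i * (cmod ((T *\<^sub>v y) $ i))\<^sup>2) \<le> (\<Sum>i<n. weight X i * (c i * N)\<^sup>2)"
      using index_mult_mat_vec_le_vnorm[OF X T y] less_imp_le[OF weight_pos[OF X]]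
      by (intro sum_mono mult_left_mono power_mono) (auto simp: c_def N_def)
    also have "\<dots> = (K * N)\<^sup>2"
      using K_sq by (simp add: power_mult_distrib sum_distrib_left ac_simps)
    finally have "vnorm_S X (V *\<^sub>v (T *\<^sub>v y)) \<le> K * N"
      unfolding vnorm_V[OF X mult_mat_vec_carrier[OF T y]] using K N by (simp add: real_le_lsqrt)
    thus ?thesis unfolding Zx by (simp add: x_eq N_def)
  qed
  thus ?thesis using that by blast
qed

lemma smoother_V: "smoother n A M * V = V * mat_diag n (\<lambda>i. 1 - lam i)"
proof -
  let ?L = "mat_diag n lam"
  have Mi: "mat_inv M \<in> carrier_mat n n" "mat_inv M * M = 1\<^sub>m n"
    using mat_inv_inverts[OF M_carrier hermitian_pd_invertible[OF M]] by auto
  have "mat n n (\<lambda>(i, j). if i = j then lam i else 0) = ?L"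
    unfolding mat_diag_def by (intro eq_matI) auto
  hence AV: "A * V = M * V * ?L" using eig by simp
  have "mat_inv M * (A * V) = mat_inv M * (M * (V * ?L))"
    unfolding AV assoc_mult_mat[OF M_carrier V mat_diag_dim] ..
  also have "\<dots> = (mat_inv M * M) * (V * ?L)"
    by (rule assoc_mult_mat[symmetric]) (use Mi M_carrier V in auto)
  also have "\<dots> = V * ?L" using Mi V by simp
  finally have MAV: "mat_inv M * (A * V) = V * ?L" .
  have "smoother n A M * V = V - mat_inv M * (A * V)"
    unfolding smoother_def using Mi A_carrier V
    by (simp add: minus_mult_distrib_mat[of _ n n _ _ n])
  also have "\<dots> = V * (1\<^sub>m n - ?L)"
    unfolding MAV mult_minus_distrib_mat[OF V one_carrier_mat mat_diag_dim] using V by simp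
  also have "1\<^sub>m n - ?L = mat_diag n (\<lambda>i. 1 - lam i)"
    unfolding mat_diag_def by (intro eq_matI) auto
  finally show ?thesis .
qed

lemma smoother_pow_V: "smoother n A M ^\<^sub>m k * V = V * mat_diag n (\<lambda>i. (1 - lam i) ^ k)"
proof (induction k)
  case 0
  show ?case using smoother_carrier[OF A_carrier M] V by simp
next
  case (Suc k)
  have S: "smoother n A M \<in> carrier_mat n n" using smoother_carrier[OF A_carrier M] .
  have "smoother n A M ^\<^sub>m Suc k * V = smoother n A M ^\<^sub>m k * (smoother n A M * V)"
    by (simp, rule assoc_mult_mat) (use S V in auto)
  also have "\<dots> = (smoother n A M ^\<^sub>m k * V) * mat_diag n (\<lambda>i. 1 - lam i)"
    unfolding smoother_V
    by (rule assoc_mult_mat[OF pow_carrier_mat[OF S] V mat_diag_dim, symmetric])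
  also have "\<dots> = V * mat_diag n (\<lambda>i. (1 - lam i) ^ Suc k)"
    unfolding Suc.IH assoc_mult_mat[OF V mat_diag_dim mat_diag_dim] by (simp add: ac_simps)
  finally show ?case .
qed

lemma smoother_pow_mult_V:
  "y \<in> carrier_vec n \<Longrightarrow>
    smoother n A M ^\<^sub>m k *\<^sub>v (V *\<^sub>v y) = V *\<^sub>v (mat_diag n (\<lambda>i. (1 - lam i) ^ k) *\<^sub>v y)"
proof -
  assume y: "y \<in> carrier_vec n"
  have S: "smoother n A M ^\<^sub>m k \<in> carrier_mat n n" using smoother_carrier[OF A_carrier M] by simp
  have "smoother n A M ^\<^sub>m k *\<^sub>v (V *\<^sub>v y) = (smoother n A M ^\<^sub>m k * V) *\<^sub>v y"
    by (rule assoc_mult_mat_vec[OF S V y, symmetric])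
  also have "\<dots> = V *\<^sub>v (mat_diag n (\<lambda>i. (1 - lam i) ^ k) *\<^sub>v y)"
    unfolding smoother_pow_V by (rule assoc_mult_mat_vec[OF V mat_diag_dim y])
  finally show ?thesis .
qed

definition leading_span :: "nat \<Rightarrow> complex vec set" where
  "leading_span k = {V *\<^sub>v z | z. z \<in> carrier_vec n \<and> (\<forall>i. k \<le> i \<and> i < n \<longrightarrow> z $ i = 0)}"

(* Indices start at 0, so lam k is the paper's lambda_(k+1). *)
definition tg_bound :: "nat \<Rightarrow> nat \<Rightarrow> real" where
  "tg_bound k \<nu> = (if k < n then cmod (1 - lam k) ^ \<nu> else 0)"

context
  fixes nc :: nat and Psh :: "complex mat"
  assumes nc: "nc \<le> n" and Psh: "Psh \<in> carrier_mat n nc"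
    and range: "{Psh *\<^sub>v y | y. y \<in> carrier_vec nc} = leading_span nc"
begin

lemma leading_preimage:
  assumes "a \<in> carrier_vec n" and "\<And>i. nc \<le> i \<Longrightarrow> i < n \<Longrightarrow> a $ i = 0"
  obtains w where "w \<in> carrier_vec nc" "Psh *\<^sub>v w = V *\<^sub>v a"
proof -
  have "V *\<^sub>v a \<in> leading_span nc" unfolding leading_span_def using assms by auto
  then obtain w where "w \<in> carrier_vec nc" "Psh *\<^sub>v w = V *\<^sub>v a"
    unfolding range[symmetric] by auto
  thus ?thesis by (rule that)
qed

lemma leading_image:
  assumes "w \<in> carrier_vec nc"
  obtains a where "a \<in> carrier_vec n" "\<And>i. nc \<le> i \<Longrightarrow> i < n \<Longrightarrow> a $ i = 0"
    "Psh *\<^sub>v w = V *\<^sub>v a"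
proof -
  have "Psh *\<^sub>v w \<in> leading_span nc" unfolding range[symmetric] using assms by auto
  then obtain a where "a \<in> carrier_vec n" "\<And>i. nc \<le> i \<Longrightarrow> i < n \<Longrightarrow> a $ i = 0"
    "Psh *\<^sub>v w = V *\<^sub>v a"
    unfolding leading_span_def by auto
  thus ?thesis by (rule that)
qed

lemma leading_injective:
  assumes u: "u \<in> carrier_vec nc" and Pu: "Psh *\<^sub>v u = 0\<^sub>v n"
  shows "u = 0\<^sub>v nc"
proof -
  have "\<exists>z. z \<in> carrier_vec nc \<and> Psh *\<^sub>v z = V *\<^sub>v unit_vec n j" if j: "j < nc" for j
  proof -
    have "unit_vec n j $ i = 0" if "nc \<le> i" "i < n" for i
      using that j by simp
    then obtain w where "w \<in> carrier_vec nc" "Psh *\<^sub>v w = V *\<^sub>v unit_vec n j"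
      using leading_preimage[OF unit_vec_carrier] by blast
    thus ?thesis by blast
  qed
  hence "\<forall>j\<in>{..<nc}. \<exists>z. z \<in> carrier_vec nc \<and> Psh *\<^sub>v z = V *\<^sub>v unit_vec n j" by blast
  from bchoice[OF this] obtain z
    where z: "\<And>j. j < nc \<Longrightarrow> z j \<in> carrier_vec nc \<and> Psh *\<^sub>v z j = V *\<^sub>v unit_vec n j"
    by blast
  define Zm where "Zm = mat nc nc (\<lambda>(i, j). z j $ i)"
  define R where "R = mat nc n (\<lambda>(i, j). mat_inv V $$ (i, j))"
  have Zm: "Zm \<in> carrier_mat nc nc" and R: "R \<in> carrier_mat nc n"
    and RP: "R * Psh \<in> carrier_mat nc nc" unfolding Zm_def R_def using Psh by auto
  \<comment> \<open>Psh maps onto the span of the first nc columns of V, so R Psh has a right inverse.\<close>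
  have "(R * Psh) * Zm = 1\<^sub>m nc"
  proof (rule eq_matI)
    fix i j assume "i < dim_row (1\<^sub>m nc)" "j < dim_col (1\<^sub>m nc)"
    hence i: "i < nc" and j: "j < nc" by auto
    have "col Zm j = z j" using z[OF j] j unfolding Zm_def by (intro eq_vecI) auto
    moreover have "((R * Psh) * Zm) $$ (i, j) = row (R * Psh) i \<bullet> col Zm j"
      by (rule index_mult_mat(1)) (use i j RP Zm in auto)
    ultimately have "((R * Psh) * Zm) $$ (i, j) = ((R * Psh) *\<^sub>v z j) $ i"
      using i carrier_matD[OF R] by simp
    also have "\<dots> = (R *\<^sub>v (V *\<^sub>v unit_vec n j)) $ i"
      using assoc_mult_mat_vec[OF R Psh, of "z j"] z[OF j] by simp
    also have "\<dots> = (mat_inv V *\<^sub>v (V *\<^sub>v unit_vec n j)) $ i"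
    proof -
      have "row R i = row (mat_inv V) i"
        using i nc V_inverse(1) unfolding R_def by (intro eq_vecI) auto
      thus ?thesis using i nc R V_inverse(1) V by simp
    qed
    also have "\<dots> = 1\<^sub>m nc $$ (i, j)"
      using i j nc by (simp add: inv_V_mult_V_vec)
    finally show "((R * Psh) * Zm) $$ (i, j) = 1\<^sub>m nc $$ (i, j)" .
  qed (use RP Zm in auto)
  hence "Zm * (R * Psh) = 1\<^sub>m nc" by (rule mat_mult_left_right_inverse[OF RP Zm])
  hence "u = (Zm * (R * Psh)) *\<^sub>v u" using u by simp
  also have "\<dots> = Zm *\<^sub>v (R *\<^sub>v (Psh *\<^sub>v u))"
    using assoc_mult_mat_vec[OF Zm RP u] assoc_mult_mat_vec[OF R Psh u] by simp
  finally have "u = Zm *\<^sub>v (R *\<^sub>v (Psh *\<^sub>v u))" .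
  thus ?thesis unfolding Pu using R Zm by (simp add: mult_mat_vec_zero)
qed

lemma invertible_leading_gram: "invertible_mat (mat_adjoint Psh * A * Psh)"
  using invertible_gram_mat[OF A Psh leading_injective] .

lemma trailing_A_orthogonal:
  assumes b: "b \<in> carrier_vec n" and b0: "\<And>i. i < nc \<Longrightarrow> b $ i = 0"
  shows "mat_adjoint Psh *\<^sub>v (A *\<^sub>v (V *\<^sub>v b)) = 0\<^sub>v nc"
proof -
  let ?u = "mat_adjoint Psh *\<^sub>v (A *\<^sub>v (V *\<^sub>v b))"
  have u: "?u \<in> carrier_vec nc" using carrier_mat_adjoint[OF Psh] A_carrier V b by simp
  obtain a where a: "a \<in> carrier_vec n" "\<And>i. nc \<le> i \<Longrightarrow> i < n \<Longrightarrow> a $ i = 0"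
    and Pu: "Psh *\<^sub>v ?u = V *\<^sub>v a" using leading_image[OF u] by blast
  have "?u \<bullet>c ?u = conjugate (Psh *\<^sub>v ?u) \<bullet> (A *\<^sub>v (V *\<^sub>v b))"
    using adjoint_sprod[OF Psh u, of "A *\<^sub>v (V *\<^sub>v b)"] conjugate_vec_sprod_comm[OF u u] A_carrier V b
    by simp
  also have "\<dots> = (\<Sum>i<n. cnj (a $ i) * ((mat_adjoint V * A * V) $$ (i, i) * b $ i))"
    unfolding Pu by (rule sprod_V_diagonal[OF A_carrier diagonal_A a(1) b])
  also have "\<dots> = 0"
  proof (intro sum.neutral ballI)
    fix i assume "i \<in> {..<n}"
    thus "cnj (a $ i) * ((mat_adjoint V * A * V) $$ (i, i) * b $ i) = 0"
      using a(2)[of i] b0[of i] by (cases "i < nc") auto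
  qed
  finally show ?thesis using u by simp
qed

lemma Pi_proj_leading_mult_V:
  assumes g: "g \<in> carrier_vec n"
  shows "Pi_proj A Psh Psh *\<^sub>v (V *\<^sub>v g) = V *\<^sub>v vec n (\<lambda>i. if i < nc then g $ i else 0)"
proof -
  note PAP = invertible_leading_gram
  define a where "a = vec n (\<lambda>i. if i < nc then g $ i else 0)"
  define b where "b = vec n (\<lambda>i. if i < nc then 0 else g $ i)"
  have a: "a \<in> carrier_vec n" and b: "b \<in> carrier_vec n" unfolding a_def b_def by auto
  have "g = a + b" unfolding a_def b_def using g by (intro eq_vecI) auto
  hence Vg: "V *\<^sub>v g = V *\<^sub>v a + V *\<^sub>v b" using mult_add_distrib_mat_vec[OF V a b] by simp
  obtain w where w: "w \<in> carrier_vec nc" "Psh *\<^sub>v w = V *\<^sub>v a"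
    using leading_preimage[OF a] unfolding a_def by auto
  have Pi_a: "Pi_proj A Psh Psh *\<^sub>v (V *\<^sub>v a) = V *\<^sub>v a"
    using Pi_proj_fixes_range[OF A_carrier Psh PAP w(1)] w(2) by simp
  have "b $ i = 0" if "i < nc" for i using that nc unfolding b_def by simp
  hence Pi_b: "Pi_proj A Psh Psh *\<^sub>v (V *\<^sub>v b) = 0\<^sub>v n"
    using Pi_proj_A_orthogonal[OF A_carrier Psh PAP _ trailing_A_orthogonal[OF b]] V b by simp
  show ?thesis
    unfolding Vg mult_add_distrib_mat_vec[OF Pi_proj_carrier[OF A_carrier Psh PAP]
        mult_mat_vec_carrier[OF V a] mult_mat_vec_carrier[OF V b]] Pi_a Pi_b a_def[symmetric]
    using V a by simp
qed

lemma E_TG_leading_mult_V: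
  assumes y: "y \<in> carrier_vec n"
  shows "E_TG n A M nu1 nu2 Psh Psh *\<^sub>v (V *\<^sub>v y) =
    V *\<^sub>v (mat_diag n (\<lambda>i. if i < nc then 0 else (1 - lam i) ^ (nu1 + nu2)) *\<^sub>v y)"
proof -
  define g where "g = mat_diag n (\<lambda>i. (1 - lam i) ^ nu1) *\<^sub>v y"
  define b where "b = vec n (\<lambda>i. if i < nc then 0 else g $ i)"
  have g: "g \<in> carrier_vec n" and b: "b \<in> carrier_vec n" unfolding g_def b_def using y by auto
  have "V *\<^sub>v g - V *\<^sub>v vec n (\<lambda>i. if i < nc then g $ i else 0) = V *\<^sub>v b"
    unfolding mult_minus_distrib_mat_vec[OF V g vec_carrier, symmetric] b_def
    using g by (intro arg_cong[of _ _ "\<lambda>v. V *\<^sub>v v"] eq_vecI) auto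
  hence "E_TG n A M nu1 nu2 Psh Psh *\<^sub>v (V *\<^sub>v y) = smoother n A M ^\<^sub>m nu2 *\<^sub>v (V *\<^sub>v b)"
    using E_TG_mult_vec[OF A_carrier M Psh invertible_leading_gram mult_mat_vec_carrier[OF V y]]
      smoother_pow_mult_V[OF y] Pi_proj_leading_mult_V[OF g]
    unfolding g_def by simp
  also have "\<dots> = V *\<^sub>v (mat_diag n (\<lambda>i. (1 - lam i) ^ nu2) *\<^sub>v b)"
    by (rule smoother_pow_mult_V[OF b])
  also have "mat_diag n (\<lambda>i. (1 - lam i) ^ nu2) *\<^sub>v b =
      mat_diag n (\<lambda>i. if i < nc then 0 else (1 - lam i) ^ (nu1 + nu2)) *\<^sub>v y"
  proof (rule eq_vecI)
    fix i
    assume "i < dim_vec (mat_diag n (\<lambda>i. if i < nc then 0 else (1 - lam i) ^ (nu1 + nu2)) *\<^sub>v y)"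
    hence i: "i < n" using y by simp
    show "(mat_diag n (\<lambda>i. (1 - lam i) ^ nu2) *\<^sub>v b) $ i =
        (mat_diag n (\<lambda>i. if i < nc then 0 else (1 - lam i) ^ (nu1 + nu2)) *\<^sub>v y) $ i"
      unfolding index_mat_diag_mult_vec[OF b i] index_mat_diag_mult_vec[OF y i]
      using i by (simp add: b_def g_def index_mat_diag_mult_vec[OF y i] power_add)
  qed (use y b in simp)
  finally show ?thesis .
qed

lemma mnorm_E_TG_leading_le:
  assumes X: "diagonalized X"
  shows "mnorm_S n X (E_TG n A M nu1 nu2 Psh Psh) \<le> tg_bound nc (nu1 + nu2)"
proof (rule mnorm_S_le[OF _ dim_pos])
  show "hermitian_pd n X" using X unfolding diagonalized_def by simp
  fix x :: "complex vec" assume "x \<in> carrier_vec n"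
  then obtain y where y: "y \<in> carrier_vec n" and x: "x = V *\<^sub>v y" by (rule V_coordinates)
  have "1 * vnorm_S X (V *\<^sub>v (mat_diag n (\<lambda>i. if i < nc then 0 else (1 - lam i) ^ (nu1 + nu2)) *\<^sub>v y))
      \<le> tg_bound nc (nu1 + nu2) * vnorm_S X (V *\<^sub>v y)"
  proof (rule vnorm_V_compare[OF X _ y])
    fix i assume i: "i < n"
    show "1 * cmod ((mat_diag n (\<lambda>i. if i < nc then 0 else (1 - lam i) ^ (nu1 + nu2)) *\<^sub>v y) $ i)
        \<le> tg_bound nc (nu1 + nu2) * cmod (y $ i)"
    proof (cases "i < nc")
      case False
      hence "cmod (1 - lam i) ^ (nu1 + nu2) \<le> cmod (1 - lam nc) ^ (nu1 + nu2)"
        using order[of nc i] i by (intro power_mono) auto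
      thus ?thesis unfolding index_mat_diag_mult_vec[OF y i]
        using False i by (auto simp: tg_bound_def norm_mult norm_power mult_right_mono)
    qed (simp add: index_mat_diag_mult_vec[OF y i] tg_bound_def)
  qed (use y in \<open>auto simp: tg_bound_def\<close>)
  thus "vnorm_S X (E_TG n A M nu1 nu2 Psh Psh *\<^sub>v x) \<le> tg_bound nc (nu1 + nu2) * vnorm_S X x"
    unfolding x E_TG_leading_mult_V[OF y] by simp
qed

end

lemma E_TG_test_vector:
  assumes P: "P \<in> carrier_mat n nc" and PAP: "invertible_mat (mat_adjoint P * A * P)"
    and nc: "nc < n"
  obtains y where "y \<in> carrier_vec n" "y \<noteq> 0\<^sub>v n" "\<And>i. nc < i \<Longrightarrow> i < n \<Longrightarrow> y $ i = 0"
    "E_TG n A M nu1 nu2 P P *\<^sub>v (V *\<^sub>v y) =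
      V *\<^sub>v (mat_diag n (\<lambda>i. (1 - lam i) ^ nu2) *\<^sub>v (mat_diag n (\<lambda>i. (1 - lam i) ^ nu1) *\<^sub>v y))"
proof -
  let ?D = "\<lambda>k. mat_diag n (\<lambda>i. (1 - lam i) ^ k)"
  have P': "mat_adjoint P \<in> carrier_mat nc n" using carrier_mat_adjoint[OF P] .
  have PAV: "mat_adjoint P * A * V \<in> carrier_mat nc n"
    using mult_carrier_mat[OF mult_carrier_mat[OF P' A_carrier] V] .
  obtain y where y: "y \<in> carrier_vec n" "y \<noteq> 0\<^sub>v n" "(mat_adjoint P * A * V * ?D nu1) *\<^sub>v y = 0\<^sub>v nc"
    and supp: "\<And>i. nc < i \<Longrightarrow> i < n \<Longrightarrow> y $ i = 0"
    using wide_mat_kernel_vec[OF mult_carrier_mat[OF PAV mat_diag_dim] nc] by blast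
  have Dy: "?D nu1 *\<^sub>v y \<in> carrier_vec n" using y(1) by simp
  have "mat_adjoint P *\<^sub>v (A *\<^sub>v (V *\<^sub>v (?D nu1 *\<^sub>v y))) = 0\<^sub>v nc"
    using y(3) assoc_mult_mat_vec[OF PAV mat_diag_dim y(1)]
      assoc_mult_mat3_vec[OF P' A_carrier V Dy] by simp
  hence "Pi_proj A P P *\<^sub>v (V *\<^sub>v (?D nu1 *\<^sub>v y)) = 0\<^sub>v n"
    by (rule Pi_proj_A_orthogonal[OF A_carrier P PAP mult_mat_vec_carrier[OF V Dy]])
  hence "E_TG n A M nu1 nu2 P P *\<^sub>v (V *\<^sub>v y) = V *\<^sub>v (?D nu2 *\<^sub>v (?D nu1 *\<^sub>v y))"
    using E_TG_mult_vec[OF A_carrier M P PAP mult_mat_vec_carrier[OF V y(1)]]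
      smoother_pow_mult_V[OF y(1)] smoother_pow_mult_V[OF Dy] V Dy by simp
  thus ?thesis using that y(1,2) supp by blast
qed

lemma tg_bound_le_mnorm_E_TG:
  assumes X: "diagonalized X" and P: "P \<in> carrier_mat n nc"
    and PAP: "invertible_mat (mat_adjoint P * A * P)"
  shows "tg_bound nc (nu1 + nu2) \<le> mnorm_S n X (E_TG n A M nu1 nu2 P P)"
proof -
  have X': "hermitian_pd n X" using X unfolding diagonalized_def by simp
  note E = E_TG_carrier[OF A_carrier M P PAP]
  obtain K where K: "\<And>x. x \<in> carrier_vec n \<Longrightarrow>
      vnorm_S X (E_TG n A M nu1 nu2 P P *\<^sub>v x) \<le> K * vnorm_S X x"
    using vnorm_bounded[OF X E] by blast
  show ?thesis
  proof (cases "nc < n")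
    case False
    thus ?thesis using mnorm_S_nonneg[OF X' dim_pos E K] by (simp add: tg_bound_def)
  next
    case True
    let ?D = "\<lambda>k. mat_diag n (\<lambda>i. (1 - lam i) ^ k)"
    obtain y where y: "y \<in> carrier_vec n" "y \<noteq> 0\<^sub>v n"
      and supp: "\<And>i. nc < i \<Longrightarrow> i < n \<Longrightarrow> y $ i = 0"
      and EV: "E_TG n A M nu1 nu2 P P *\<^sub>v (V *\<^sub>v y) = V *\<^sub>v (?D nu2 *\<^sub>v (?D nu1 *\<^sub>v y))"
      using E_TG_test_vector[OF P PAP True] by blast
    have Dy: "?D nu1 *\<^sub>v y \<in> carrier_vec n" using y(1) by simp
    have "tg_bound nc (nu1 + nu2) * vnorm_S X (V *\<^sub>v y) \<le>
        1 * vnorm_S X (V *\<^sub>v (?D nu2 *\<^sub>v (?D nu1 *\<^sub>v y)))"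
    proof (rule vnorm_V_compare[OF X y(1)])
      fix i assume i: "i < n"
      show "tg_bound nc (nu1 + nu2) * cmod (y $ i) \<le> 1 * cmod ((?D nu2 *\<^sub>v (?D nu1 *\<^sub>v y)) $ i)"
      proof (cases "i \<le> nc")
        case True
        hence "cmod (1 - lam nc) ^ (nu1 + nu2) \<le> cmod (1 - lam i) ^ (nu1 + nu2)"
          using order[of i nc] \<open>nc < n\<close> by (intro power_mono) auto
        thus ?thesis
          unfolding index_mat_diag_mult_vec[OF Dy i] index_mat_diag_mult_vec[OF y(1) i]
          using True \<open>nc < n\<close>
          by (auto simp: tg_bound_def norm_mult norm_power power_add mult_left_mono ac_simps)
      qed (use i supp in simp)
    qed (use y(1) in \<open>auto simp: tg_bound_def\<close>)
    hence "tg_bound nc (nu1 + nu2) * vnorm_S X (V *\<^sub>v y) \<le>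
        vnorm_S X (E_TG n A M nu1 nu2 P P *\<^sub>v (V *\<^sub>v y))"
      unfolding EV by simp
    from mnorm_S_ge[OF X' K mult_mat_vec_carrier[OF V y(1)] V_mult_vec_nonzero[OF y] this]
    show ?thesis .
  qed
qed

end

theorem corollary3p6:
  fixes n nc :: nat and A M Vr Psh :: "complex mat" and lam :: "nat \<Rightarrow> complex"
  assumes A: "hermitian_pd n A" and M: "hermitian_pd n M"
    and Vr: "Vr \<in> carrier_mat n n" "invertible_mat Vr"
    and eig: "A * Vr = M * Vr * mat n n (\<lambda>(i, j). if i = j then lam i else 0)"
    and diagA: "diagonal_mat (mat_adjoint Vr * A * Vr)"
    and diagM: "diagonal_mat (mat_adjoint Vr * M * Vr)"
    and order: "\<And>i j. i \<le> j \<Longrightarrow> j < n \<Longrightarrow> cmod (1 - lam j) \<le> cmod (1 - lam i)"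
    and nc: "1 \<le> nc" "nc \<le> n"
    and Psh: "Psh \<in> carrier_mat n nc"
    and range: "{Psh *\<^sub>v y | y. y \<in> carrier_vec nc} =
                {Vr *\<^sub>v z | z. z \<in> carrier_vec n \<and> (\<forall>i. nc \<le> i \<and> i < n \<longrightarrow> z $ i = 0)}"
  shows "\<forall>nu1 nu2 :: nat.
     invertible_mat (mat_adjoint Psh * A * Psh) \<and>
     (\<forall>P \<in> carrier_mat n nc. invertible_mat (mat_adjoint P * A * P) \<longrightarrow>
        mnorm_S n A (E_TG n A M nu1 nu2 Psh Psh) \<le> mnorm_S n A (E_TG n A M nu1 nu2 P P)) \<and>
     (\<forall>P \<in> carrier_mat n nc. invertible_mat (mat_adjoint P * A * P) \<longrightarrow>
        mnorm_S n M (E_TG n A M nu1 nu2 Psh Psh) \<le> mnorm_S n M (E_TG n A M nu1 nu2 P P)) \<and>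
     (nc < n \<longrightarrow>
        mnorm_S n A (E_TG n A M nu1 nu2 Psh Psh) = cmod (1 - lam nc) ^ (nu1 + nu2) \<and>
        mnorm_S n M (E_TG n A M nu1 nu2 Psh Psh) = cmod (1 - lam nc) ^ (nu1 + nu2))"
proof -
  interpret ordered_eigenbasis n A M Vr lam
    using A M Vr eig diagA diagM order nc by unfold_locales auto
  have range': "{Psh *\<^sub>v y | y. y \<in> carrier_vec nc} = leading_span nc"
    unfolding leading_span_def by (rule range)
  note leading_gram = invertible_leading_gram[OF nc(2) Psh range']
  note upper = mnorm_E_TG_leading_le[OF nc(2) Psh range']
  note lower = tg_bound_le_mnorm_E_TG
  have optimal: "mnorm_S n X (E_TG n A M nu1 nu2 Psh Psh) \<le> mnorm_S n X (E_TG n A M nu1 nu2 P P)"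
    if "diagonalized X" "P \<in> carrier_mat n nc" "invertible_mat (mat_adjoint P * A * P)"
    for X P nu1 nu2
    using upper[OF that(1)] lower[OF that] by (rule order.trans)
  have sharp: "mnorm_S n X (E_TG n A M nu1 nu2 Psh Psh) = cmod (1 - lam nc) ^ (nu1 + nu2)"
    if "diagonalized X" "nc < n" for X nu1 nu2
    using antisym[OF upper[OF that(1)] lower[OF that(1) Psh leading_gram]] that(2)
    by (simp add: tg_bound_def)
  show ?thesis
    using optimal[OF diagonalized_A] optimal[OF diagonalized_M] sharp[OF diagonalized_A]
      sharp[OF diagonalized_M] leading_gram by blast
qed

end
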